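(* Fix constants $n_0>0$ and $\sigma_0>0$. For $\chi_0\ge 0$ and $b\in[0,n_0]$ let $$\tilde D(b,\chi_0)=n_0\, b\left(1-\frac{b}{n_0}\right)(1+\chi_0 b),\qquad g(b)=n_0\, b\left(1-\frac{b}{n_0}\right),$$ and define $$\bar c(\chi_0)=2n_0\sqrt{\sigma_0}\,\sqrt{\max_{b\in[0,n_0]} b\left(1-\frac{b}{n_0}\right)^2(1+\chi_0 b)}.$$ For $\chi_0\ge 0$ let $A_{\chi_0}$ be the set of all $c>0$ such that the boundary value problem $$\frac{dz}{db}=-c-\frac{\tilde D(b,\chi_0)\,g(b)}{z},\qquad b\in(0,n_0),\qquad z(0^+)=z(n_0^-)=0,$$ has a non-positive solution $z=z(b)$, and let $c_*(\chi_0)=\inf A_{\chi_0}$. Then for every $\chi_0\ge 0$: (i) $\bar c(\chi_0)\ge \bar c(0)$, and (ii) $c_*(\chi_0)\ge c_*(0)$.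
   Context: These objects arise from the scalar reaction-diffusion equation $b_t=(\tilde D(b,\chi_0)b_x)_x+g(b)$ on $[0,n_0]$, where $\chi_0\ge0$ is a chemotactic sensitivity; $c\in A_{\chi_0}$ corresponds to existence of a traveling wave with speed $c$, and $c_*(\chi_0)$ is the threshold (minimal) wave speed. $z(0^+)$ and $z(n_0^-)$ denote the one-sided limits of $z$ at $0$ and $n_0$. *)

theory Defs
  imports "HOL-Analysis.Analysis"
begin

definition Dtilde :: "real \<Rightarrow> real \<Rightarrow> real \<Rightarrow> real" where
  "Dtilde n0 b chi0 = n0 * b * (1 - b / n0) * (1 + chi0 * b)"

definition gfun :: "real \<Rightarrow> real \<Rightarrow> real" where
  "gfun n0 b = n0 * b * (1 - b / n0)"

text \<open>cbar; the maximum over the compact interval is written as a supremum (it is attained).\<close>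
definition cbar :: "real \<Rightarrow> real \<Rightarrow> real \<Rightarrow> real" where
  "cbar n0 sigma0 chi0 =
     2 * n0 * sqrt sigma0 *
     sqrt (Sup ((\<lambda>b. b * (1 - b / n0)^2 * (1 + chi0 * b)) ` {0..n0}))"

text \<open>z is a non-positive solution of the boundary value problem on (0,n0);
  the ODE right-hand side must be defined, so z does not vanish in the interior.\<close>
definition is_nonpos_solution :: "real \<Rightarrow> real \<Rightarrow> real \<Rightarrow> (real \<Rightarrow> real) \<Rightarrow> bool" where
  "is_nonpos_solution n0 chi0 c z \<longleftrightarrow>
     (\<forall>b\<in>{0<..<n0}. z b \<le> 0 \<and> z b \<noteq> 0 \<and>
        (z has_real_derivative (- c - Dtilde n0 b chi0 * gfun n0 b / z b)) (at b)) \<and>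
     (z \<longlongrightarrow> 0) (at_right 0) \<and> (z \<longlongrightarrow> 0) (at_left n0)"

definition A_set :: "real \<Rightarrow> real \<Rightarrow> real set" where
  "A_set n0 chi0 = {c. c > 0 \<and> (\<exists>z. is_nonpos_solution n0 chi0 c z)}"

definition c_star :: "real \<Rightarrow> real \<Rightarrow> real" where
  "c_star n0 chi0 = Inf (A_set n0 chi0)"

end

theory Submission
  imports Defs
begin

text \<open>Part (i) holds because the maximised function \<open>b (1 - b / n0)\<^sup>2 (1 + chi0 b)\<close> is
  pointwise increasing in \<open>chi0\<close>.

  For part (ii) write the equation as \<open>z' = - c - G(b) / z\<close> with source
  \<open>G = n0\<^sup>2 u\<^sup>2 (1 + chi0 b)\<close>, \<open>u = b (1 - b / n0)\<close>. For negative \<open>z\<close> the right-hand side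
  increases with \<open>G\<close> and with \<open>z\<close>. Hence a solution \<open>z\<close> for some \<open>chi0\<close> is a lower barrier
  (\<open>z' \<ge> rhs(z)\<close>) for every smaller \<open>chi0\<close>, while \<open>- m u\<^sup>2\<close> is an upper barrier lying above
  \<open>z\<close>. Between a lower and an upper barrier there is a solution with the same speed \<open>c\<close>: on
  compact subintervals it is obtained by monotone iteration of the integrated equation
  (integrating backwards from the right end, after an exponential shift that makes the iteration
  monotone), and the solutions on an exhausting sequence of intervals decrease to a solution on
  \<open>(0, n0)\<close>. So \<open>A_set n0 chi0 \<subseteq> A_set n0 0\<close>. Comparing the infima also needs
  \<open>A_set n0 chi0 \<noteq> {}\<close>, since \<open>Inf {}\<close> is unspecified; for large \<open>c\<close> the function \<open>- u\<close> is
  a lower barrier, which gives an element.\<close>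

section \<open>Barriers and comparison\<close>

definition front_rhs :: "real \<Rightarrow> (real \<Rightarrow> real) \<Rightarrow> real \<Rightarrow> real \<Rightarrow> real" where
  "front_rhs c G s y = - c - G s / y"

lemma front_rhs_mono:
  assumes "0 \<le> G s" and "y1 \<le> y2" and "y2 < 0"
  shows "front_rhs c G s y1 \<le> front_rhs c G s y2"
proof -
  have "G s / y2 \<le> G s / y1"
    using assms by (intro divide_left_mono) (auto intro: mult_neg_neg)
  then show ?thesis unfolding front_rhs_def by simp
qed

lemma front_rhs_mono_source:
  assumes "G0 s \<le> G1 s" and "y < 0"
  shows "front_rhs c G0 s y \<le> front_rhs c G1 s y"
  using divide_right_mono_neg[OF assms(1) less_imp_le[OF assms(2)]]
  unfolding front_rhs_def by simp

text \<open>Barriers are oriented for the problem solved backwards from the right end: a lower barrier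
  (\<open>L' \<ge> front_rhs\<close>) stays below a solution to its left, an upper one stays above.\<close>

definition lower_barrier :: "real \<Rightarrow> (real \<Rightarrow> real) \<Rightarrow> real set \<Rightarrow> (real \<Rightarrow> real) \<Rightarrow> bool" where
  "lower_barrier c G S L \<longleftrightarrow>
     (\<forall>s\<in>S. \<exists>D. (L has_real_derivative D) (at s) \<and> front_rhs c G s (L s) \<le> D)"

definition upper_barrier :: "real \<Rightarrow> (real \<Rightarrow> real) \<Rightarrow> real set \<Rightarrow> (real \<Rightarrow> real) \<Rightarrow> bool" where
  "upper_barrier c G S U \<longleftrightarrow>
     (\<forall>s\<in>S. \<exists>D. (U has_real_derivative D) (at s) \<and> D \<le> front_rhs c G s (U s))"

lemma lower_barrier_subset: "lower_barrier c G S L \<Longrightarrow> T \<subseteq> S \<Longrightarrow> lower_barrier c G T L"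
  unfolding lower_barrier_def by blast

lemma upper_barrier_subset: "upper_barrier c G S U \<Longrightarrow> T \<subseteq> S \<Longrightarrow> upper_barrier c G T U"
  unfolding upper_barrier_def by blast

lemma lower_barrier_continuous_on: "lower_barrier c G S L \<Longrightarrow> continuous_on S L"
  unfolding lower_barrier_def
  by (intro continuous_at_imp_continuous_on) (blast intro: DERIV_isCont)

lemma upper_barrier_continuous_on: "upper_barrier c G S U \<Longrightarrow> continuous_on S U"
  unfolding upper_barrier_def
  by (intro continuous_at_imp_continuous_on) (blast intro: DERIV_isCont)

lemma first_zero_after:
  fixes h :: "real \<Rightarrow> real"
  assumes "x \<le> b" and "continuous_on {x..b} h" and "0 < h x" and "h b \<le> 0"
  obtains y where "y \<in> {x<..b}" "h y = 0" "\<forall>t\<in>{x..<y}. 0 < h t"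
proof -
  define S where "S = {t\<in>{x..b}. h t \<le> 0}"
  have "closed S" unfolding S_def
    by (rule continuous_on_closed_Collect_le[where g="\<lambda>_. 0"]) (use assms(2) in auto)
  moreover have "b \<in> S" "bdd_below S"
    unfolding S_def using assms by (auto intro: bdd_belowI[of _ x] order.trans)
  ultimately have y: "Inf S \<in> S" "\<forall>t\<in>S. Inf S \<le> t"
    using closed_contains_Inf cInf_lower by blast+
  have pos: "\<forall>t\<in>{x..<Inf S}. 0 < h t"
    using y unfolding S_def by force
  have xy: "x < Inf S"
    using y assms(3) unfolding S_def by (cases "x = Inf S") auto
  have "0 \<le> h (Inf S)"
  proof (rule tendsto_lowerbound)
    show "(h \<longlongrightarrow> h (Inf S)) (at_left (Inf S))"
      by (rule continuous_on_Icc_at_leftD[OF continuous_on_subset[OF assms(2)] xy])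
         (use y(1) in \<open>auto simp: S_def\<close>)
    show "\<forall>\<^sub>F t in at_left (Inf S). 0 \<le> h t"
      using eventually_at_left_real[OF xy] by eventually_elim (use pos in \<open>auto intro: less_imp_le\<close>)
  qed simp
  then show thesis
    using that[of "Inf S"] y(1) xy pos unfolding S_def by auto
qed

definition integral_solution :: "real \<Rightarrow> (real \<Rightarrow> real) \<Rightarrow> real \<Rightarrow> real \<Rightarrow> (real \<Rightarrow> real) \<Rightarrow> bool" where
  "integral_solution c G a b w \<longleftrightarrow> continuous_on {a..b} w \<and> (\<forall>s\<in>{a..b}. w s < 0) \<and>
     (\<forall>x y. a \<le> x \<longrightarrow> x \<le> y \<longrightarrow> y \<le> b \<longrightarrow>
        ((\<lambda>s. front_rhs c G s (w s)) has_integral (w y - w x)) {x..y})"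

lemma integral_solution_subinterval:
  "integral_solution c G a b w \<Longrightarrow> a \<le> a' \<Longrightarrow> b' \<le> b \<Longrightarrow> integral_solution c G a' b' w"
  unfolding integral_solution_def by (auto elim: continuous_on_subset)

lemma integral_solution_le_if_le_at_end:
  assumes w1: "integral_solution c G a b w1" and w2: "integral_solution c G a b w2"
    and G: "\<forall>s\<in>{a..b}. 0 \<le> G s" and end_le: "w1 b \<le> w2 b" and x: "x \<in> {a..b}"
  shows "w1 x \<le> w2 x"
proof (rule ccontr)
  assume "\<not> w1 x \<le> w2 x"
  define h where "h t = w1 t - w2 t" for t
  have hcont: "continuous_on {x..b} h"
    unfolding h_def using w1 w2 x unfolding integral_solution_def
    by (intro continuous_intros; auto elim: continuous_on_subset)
  obtain y where y: "y \<in> {x<..b}" "h y = 0" "\<forall>t\<in>{x..<y}. 0 < h t"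
    by (rule first_zero_after[OF _ hcont]) (use x \<open>\<not> w1 x \<le> w2 x\<close> end_le in \<open>auto simp: h_def\<close>)
  have "w2 y - w2 x \<le> w1 y - w1 x"
  proof (rule has_integral_le)
    show "((\<lambda>s. front_rhs c G s (w2 s)) has_integral w2 y - w2 x) {x..y}"
      "((\<lambda>s. front_rhs c G s (w1 s)) has_integral w1 y - w1 x) {x..y}"
      using w1 w2 x y unfolding integral_solution_def by auto
  next
    fix s assume s: "s \<in> {x..y}"
    have "0 \<le> h s"
    proof (cases "s = y")
      case False
      then have "s \<in> {x..<y}" using s by auto
      then show ?thesis using y(3) by (simp add: less_imp_le)
    qed (use y in simp)
    then have "w2 s \<le> w1 s" unfolding h_def by simp
    then show "front_rhs c G s (w2 s) \<le> front_rhs c G s (w1 s)"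
      using w1 G s x y unfolding integral_solution_def by (intro front_rhs_mono) auto
  qed
  then show False
    using y \<open>\<not> w1 x \<le> w2 x\<close> unfolding h_def by auto
qed

lemma DERIV_nonneg_on_positive_imp_nondecreasing:
  fixes h :: "real \<Rightarrow> real"
  assumes "s \<le> t" and hs: "0 < h s"
    and hder: "\<And>x. x \<in> {s..t} \<Longrightarrow> \<exists>D. (h has_real_derivative D) (at x) \<and> (0 < h x \<longrightarrow> 0 \<le> D)"
  shows "h s \<le> h t"
proof -
  have hcont: "continuous_on {s..t} h"
    using hder by (intro continuous_at_imp_continuous_on ballI) (blast intro: DERIV_isCont)
  have half: "h s / 2 < h x" if x: "x \<in> {s..t}" for x
  proof (rule ccontr)
    assume "\<not> h s / 2 < h x"
    obtain y where y: "y \<in> {s<..x}" "h y - h s / 2 = 0" "\<forall>r\<in>{s..<y}. 0 < h r - h s / 2"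
      by (rule first_zero_after[of s x "\<lambda>r. h r - h s / 2"])
        (use x hs \<open>\<not> h s / 2 < h x\<close> continuous_on_subset[OF hcont] in \<open>auto intro!: continuous_intros\<close>)
    have "h s \<le> h y"
    proof (rule DERIV_nonneg_imp_nondecreasing[of s y h])
      fix r assume r: "s \<le> r" "r \<le> y"
      have "0 < h r"
      proof (cases "r = y")
        case False
        then have "r \<in> {s..<y}" using r by auto
        then show ?thesis using y(3) hs by (smt (verit) half_gt_zero)
      qed (use y hs in simp)
      then show "\<exists>D. (h has_real_derivative D) (at r) \<and> D \<ge> 0"
        using hder[of r] r y x by auto
    qed (use y in auto)
    then show False using y hs by simp
  qed
  show ?thesis
  proof (rule DERIV_nonneg_imp_nondecreasing[of s t h])
    fix x assume "s \<le> x" "x \<le> t"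
    then show "\<exists>D. (h has_real_derivative D) (at x) \<and> D \<ge> 0"
      using hder[of x] half[of x] hs by fastforce
  qed (rule assms(1))
qed

lemma lower_barrier_le_upper_barrier:
  assumes G: "\<forall>s\<in>{a<..<b}. 0 \<le> G s"
    and z: "lower_barrier c G {a<..<b} z" "\<forall>s\<in>{a<..<b}. z s < 0"
    and U: "upper_barrier c G {a<..<b} U"
    and lim: "((\<lambda>s. z s - U s) \<longlongrightarrow> 0) (at_left b)"
    and s: "s \<in> {a<..<b}"
  shows "z s \<le> U s"
proof (rule ccontr)
  define h where "h t = z t - U t" for t
  assume "\<not> z s \<le> U s"
  then have hs: "0 < h s" unfolding h_def by simp
  have hder: "\<exists>D. (h has_real_derivative D) (at t) \<and> (0 < h t \<longrightarrow> 0 \<le> D)"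
    if t: "t \<in> {a<..<b}" for t
  proof -
    obtain Dz DU where Dz: "(z has_real_derivative Dz) (at t)" "front_rhs c G t (z t) \<le> Dz"
      and DU: "(U has_real_derivative DU) (at t)" "DU \<le> front_rhs c G t (U t)"
      using z(1) U t unfolding lower_barrier_def upper_barrier_def by blast
    have "front_rhs c G t (U t) \<le> front_rhs c G t (z t)" if "0 < h t"
      using G z(2) t that unfolding h_def by (intro front_rhs_mono) auto
    then show ?thesis
      unfolding h_def using Dz DU by (intro exI[of _ "Dz - DU"]) (auto intro: derivative_intros)
  qed
  have mono: "h s \<le> h t" if t: "t \<in> {s..<b}" for t
  proof (rule DERIV_nonneg_on_positive_imp_nondecreasing[of s t h, OF _ hs])
    fix x assume "x \<in> {s..t}"
    then show "\<exists>D. (h has_real_derivative D) (at x) \<and> (0 < h x \<longrightarrow> 0 \<le> D)"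
      using t s by (intro hder) auto
  qed (use t in auto)
  have "h s \<le> 0"
  proof (rule tendsto_lowerbound)
    show "(h \<longlongrightarrow> 0) (at_left b)" using lim unfolding h_def .
    show "\<forall>\<^sub>F t in at_left b. h s \<le> h t"
    proof (rule eventually_mono[OF eventually_at_left_real])
      show "s < b" using s by simp
    qed (use mono in auto)
  qed simp
  then show False using hs by simp
qed

section \<open>Solutions on a compact interval\<close>

lemma has_integral_exp_weighted_derivative:
  fixes V V' :: "real \<Rightarrow> real"
  assumes "x \<le> b" and "\<forall>s\<in>{x..b}. (V has_real_derivative V' s) (at s)"
  shows "((\<lambda>s. exp (- M * s) * (V' s - M * V s)) has_integral
           (exp (- M * b) * V b - exp (- M * x) * V x)) {x..b}"
proof (rule fundamental_theorem_of_calculus[OF assms(1)])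
  fix s assume s: "s \<in> {x..b}"
  have "((\<lambda>s. exp (- M * s) * V s) has_real_derivative
      exp (- M * s) * (- M) * V s + exp (- M * s) * V' s) (at s)"
    using assms(2) s by (auto intro!: derivative_eq_intros)
  then have "((\<lambda>s. exp (- M * s) * V s) has_real_derivative
      exp (- M * s) * (V' s - M * V s)) (at s within {x..b})"
    by (auto simp: algebra_simps intro: has_field_derivative_at_within)
  then show "((\<lambda>s. exp (- M * s) * V s) has_vector_derivative
      exp (- M * s) * (V' s - M * V s)) (at s within {x..b})"
    by (simp add: has_real_derivative_iff_has_vector_derivative)
qed

lemma exists_bound_by_square:
  fixes G U :: "real \<Rightarrow> real"
  assumes "continuous_on {a..b} G" and "continuous_on {a..b} U" and "\<forall>s\<in>{a..b}. U s \<noteq> 0"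
  obtains M where "\<forall>s\<in>{a..b}. G s \<le> M * (U s)^2"
proof -
  have "compact ((\<lambda>s. G s / (U s)^2) ` {a..b})"
    using assms by (intro compact_continuous_image continuous_intros) auto
  then obtain M where M: "\<forall>y\<in>(\<lambda>s. G s / (U s)^2) ` {a..b}. norm y \<le> M"
    using compact_imp_bounded bounded_iff by metis
  have "G s \<le> M * (U s)^2" if s: "s \<in> {a..b}" for s
  proof -
    have "G s / (U s)^2 \<le> M"
      using M s abs_ge_self[of "G s / (U s)^2"] by force
    then show ?thesis
      using assms(3) s by (simp add: divide_le_eq)
  qed
  then show thesis using that by blast
qed

locale barrier_iteration =
  fixes c M a b v :: real and G L U :: "real \<Rightarrow> real"
  assumes a_less_b: "a < b"
    and G_cont: "continuous_on {a..b} G"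
    and G_nonneg: "\<And>s. s \<in> {a..b} \<Longrightarrow> 0 \<le> G s"
    and M_bound: "\<And>s. s \<in> {a..b} \<Longrightarrow> G s \<le> M * (U s)^2"
    and lower: "lower_barrier c G {a..b} L"
    and upper: "upper_barrier c G {a..b} U"
    and L_le_U: "\<And>s. s \<in> {a..b} \<Longrightarrow> L s \<le> U s"
    and U_neg: "\<And>s. s \<in> {a..b} \<Longrightarrow> U s < 0"
    and L_le_v: "L b \<le> v" and v_le_U: "v \<le> U b"
begin

text \<open>Writing \<open>w' = front_rhs c G s w\<close> as \<open>(exp (- M * s) * w)' = weighted w s\<close> and integrating
  backwards from the end value \<open>w b = v\<close> turns the problem into the fixed point equation
  \<open>step w = w\<close>. The shift by \<open>M\<close> makes \<open>step\<close> monotone between the barriers.\<close>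

definition shifted :: "real \<Rightarrow> real \<Rightarrow> real" where
  "shifted s y = front_rhs c G s y - M * y"

definition weighted :: "(real \<Rightarrow> real) \<Rightarrow> real \<Rightarrow> real" where
  "weighted w s = exp (- M * s) * shifted s (w s)"

definition step :: "(real \<Rightarrow> real) \<Rightarrow> real \<Rightarrow> real" where
  "step w x = exp (M * x) * (exp (- M * b) * v - integral {x..b} (weighted w))"

definition trapped :: "(real \<Rightarrow> real) set" where
  "trapped = {w. continuous_on {a..b} w \<and> (\<forall>s\<in>{a..b}. L s \<le> w s \<and> w s \<le> U s)}"

lemma shifted_antimono:
  assumes s: "s \<in> {a..b}" and y: "L s \<le> y1" "y1 \<le> y2" "y2 \<le> U s"
  shows "shifted s y2 \<le> shifted s y1"
proof -
  have neg: "U s < 0" "y1 < 0" "y2 < 0" using U_neg[OF s] y by linarith+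
  have "(U s)^2 \<le> y1 * y2"
    using mult_mono[of "- U s" "- y1" "- U s" "- y2"] y neg by (simp add: power2_eq_square)
  then have "G s / (y1 * y2) \<le> G s / (U s)^2"
    using G_nonneg[OF s] neg by (intro divide_left_mono) (auto simp: mult_neg_neg)
  also have "\<dots> \<le> M"
    using M_bound[OF s] neg by (simp add: divide_le_eq)
  finally have "0 \<le> (y2 - y1) * (M - G s / (y1 * y2))"
    using y by simp
  moreover have "shifted s y1 - shifted s y2 = (y2 - y1) * (M - G s / (y1 * y2))"
    using neg unfolding shifted_def front_rhs_def by (simp add: field_simps)
  ultimately show ?thesis by simp
qed

lemma trapped_neg: "w \<in> trapped \<Longrightarrow> s \<in> {a..b} \<Longrightarrow> w s < 0"
  unfolding trapped_def using U_neg by fastforce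

lemma shifted_continuous_on:
  assumes "w \<in> trapped"
  shows "continuous_on {a..b} (\<lambda>s. shifted s (w s))"
proof -
  have "\<forall>s\<in>{a..b}. w s \<noteq> 0" using trapped_neg[OF assms] by fastforce
  then show ?thesis
    using assms G_cont unfolding shifted_def front_rhs_def trapped_def
    by (intro continuous_intros) auto
qed

lemma weighted_continuous_on: "w \<in> trapped \<Longrightarrow> continuous_on {a..b} (weighted w)"
  unfolding weighted_def by (intro continuous_intros shifted_continuous_on)

lemma weighted_integrable:
  assumes "w \<in> trapped" and "a \<le> x"
  shows "weighted w integrable_on {x..b}"
  by (intro integrable_continuous_real continuous_on_subset[OF weighted_continuous_on[OF assms(1)]])
    (use assms(2) in auto)

lemma step_continuous_on:
  assumes "weighted w integrable_on {a..b}"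
  shows "continuous_on {a..b} (step w)"
  unfolding step_def by (intro continuous_intros indefinite_integral_continuous_1' assms)

lemma step_at_end: "step w b = v"
  unfolding step_def by (simp add: mult.assoc[symmetric] exp_add[symmetric])

lemma step_mono:
  assumes w: "w1 \<in> trapped" "w2 \<in> trapped" "\<forall>s\<in>{a..b}. w1 s \<le> w2 s" and x: "x \<in> {a..b}"
  shows "step w1 x \<le> step w2 x"
proof -
  have "integral {x..b} (weighted w2) \<le> integral {x..b} (weighted w1)"
  proof (rule integral_le)
    show "weighted w2 integrable_on {x..b}" "weighted w1 integrable_on {x..b}"
      using w x by (auto intro: weighted_integrable)
  next
    fix s assume "s \<in> {x..b}"
    then have "shifted s (w2 s) \<le> shifted s (w1 s)"
      using w x by (intro shifted_antimono) (auto simp: trapped_def)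
    then show "weighted w2 s \<le> weighted w1 s" unfolding weighted_def by simp
  qed
  then show ?thesis unfolding step_def by (intro mult_left_mono) auto
qed

lemma barrier_defect_has_integral:
  assumes x: "x \<in> {a..b}" and V: "V \<in> trapped"
    and V': "\<forall>s\<in>{x..b}. (V has_real_derivative V' s) (at s)"
  shows "((\<lambda>s. exp (- M * s) * (V' s - front_rhs c G s (V s))) has_integral
      (exp (- M * b) * V b - exp (- M * x) * V x - integral {x..b} (weighted V))) {x..b}"
proof -
  have "((\<lambda>s. exp (- M * s) * (V' s - M * V s) - weighted V s) has_integral
      (exp (- M * b) * V b - exp (- M * x) * V x - integral {x..b} (weighted V))) {x..b}"
    using x V V' by (intro has_integral_diff has_integral_exp_weighted_derivative
        integrable_integral weighted_integrable) auto
  then show ?thesis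
    unfolding weighted_def shifted_def by (simp add: algebra_simps)
qed

lemma step_upper_le:
  assumes x: "x \<in> {a..b}"
  shows "step U x \<le> U x"
proof -
  obtain U' where U': "\<forall>s\<in>{a..b}. (U has_real_derivative U' s) (at s) \<and> U' s \<le> front_rhs c G s (U s)"
    using upper unfolding upper_barrier_def by metis
  have UT: "U \<in> trapped"
    using upper_barrier_continuous_on[OF upper] L_le_U by (auto simp: trapped_def)
  have "exp (- M * b) * U b - exp (- M * x) * U x - integral {x..b} (weighted U) \<le> 0"
    by (rule has_integral_le[OF barrier_defect_has_integral[OF x UT, of U'] has_integral_0])
       (use x U' in \<open>auto simp: mult_le_0_iff\<close>)
  moreover have "exp (- M * b) * v \<le> exp (- M * b) * U b" using v_le_U by simp
  ultimately have "exp (- M * b) * v - integral {x..b} (weighted U) \<le> exp (- M * x) * U x"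
    by linarith
  then have "exp (M * x) * (exp (- M * b) * v - integral {x..b} (weighted U))
      \<le> exp (M * x) * (exp (- M * x) * U x)"
    by (rule mult_left_mono) simp
  then show ?thesis
    unfolding step_def by (simp add: mult.assoc[symmetric] exp_add[symmetric])
qed

lemma step_lower_ge:
  assumes x: "x \<in> {a..b}"
  shows "L x \<le> step L x"
proof -
  obtain L' where L': "\<forall>s\<in>{a..b}. (L has_real_derivative L' s) (at s) \<and> front_rhs c G s (L s) \<le> L' s"
    using lower unfolding lower_barrier_def by metis
  have LT: "L \<in> trapped"
    using lower_barrier_continuous_on[OF lower] L_le_U by (auto simp: trapped_def)
  have "0 \<le> exp (- M * b) * L b - exp (- M * x) * L x - integral {x..b} (weighted L)"
    by (rule has_integral_nonneg[OF barrier_defect_has_integral[OF x LT, of L']])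
       (use x L' in auto)
  moreover have "exp (- M * b) * L b \<le> exp (- M * b) * v" using L_le_v by simp
  ultimately have "exp (- M * x) * L x \<le> exp (- M * b) * v - integral {x..b} (weighted L)"
    by linarith
  then have "exp (M * x) * (exp (- M * x) * L x)
      \<le> exp (M * x) * (exp (- M * b) * v - integral {x..b} (weighted L))"
    by (rule mult_left_mono) simp
  then show ?thesis
    unfolding step_def by (simp add: mult.assoc[symmetric] exp_add[symmetric])
qed

end

context barrier_iteration
begin

lemma upper_trapped: "U \<in> trapped"
  using upper_barrier_continuous_on[OF upper] L_le_U by (auto simp: trapped_def)

lemma lower_trapped: "L \<in> trapped"
  using lower_barrier_continuous_on[OF lower] L_le_U by (auto simp: trapped_def)

lemma step_trapped:
  assumes w: "w \<in> trapped"
  shows "step w \<in> trapped"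
proof -
  have "step w x \<le> U x" if x: "x \<in> {a..b}" for x
    using step_mono[OF w upper_trapped _ x] step_upper_le[OF x] w by (force simp: trapped_def)
  moreover have "L x \<le> step w x" if x: "x \<in> {a..b}" for x
    using step_mono[OF lower_trapped w _ x] step_lower_ge[OF x] w by (force simp: trapped_def)
  moreover have "continuous_on {a..b} (step w)"
    by (rule step_continuous_on[OF weighted_integrable[OF w order_refl]])
  ultimately show ?thesis unfolding trapped_def by auto
qed

definition iter :: "nat \<Rightarrow> real \<Rightarrow> real" where
  "iter k = (step ^^ k) U"

definition limit :: "real \<Rightarrow> real" where
  "limit s = (INF k. iter k s)"

lemma iter_Suc: "iter (Suc k) = step (iter k)"
  by (simp add: iter_def)

lemma iter_trapped: "iter k \<in> trapped"
  by (induction k) (simp_all add: iter_def upper_trapped step_trapped)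

lemma iter_decreasing: "s \<in> {a..b} \<Longrightarrow> iter (Suc k) s \<le> iter k s"
proof (induction k arbitrary: s)
  case 0
  then show ?case using step_upper_le by (simp add: iter_def)
next
  case (Suc k)
  have "\<forall>s\<in>{a..b}. iter (Suc k) s \<le> iter k s" using Suc.IH by blast
  from step_mono[OF iter_trapped iter_trapped this Suc.prems] show ?case
    by (simp only: iter_Suc)
qed

lemma iter_between: "s \<in> {a..b} \<Longrightarrow> L s \<le> iter k s \<and> iter k s \<le> U s"
  using iter_trapped[of k] by (auto simp: trapped_def)

lemma iter_tendsto_limit:
  assumes s: "s \<in> {a..b}"
  shows "(\<lambda>k. iter k s) \<longlonglongrightarrow> limit s"
  unfolding limit_def
proof (rule LIMSEQ_decseq_INF)
  show "bdd_below (range (\<lambda>k. iter k s))"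
    using iter_between[OF s] by (auto intro: bdd_belowI[of _ "L s"])
  show "decseq (\<lambda>k. iter k s)"
    using iter_decreasing[OF s] by (simp add: decseq_Suc_iff)
qed

lemma limit_between:
  assumes s: "s \<in> {a..b}"
  shows "L s \<le> limit s" and "limit s \<le> U s"
   by (rule LIMSEQ_le_const[OF iter_tendsto_limit[OF s]], use iter_between[OF s] in blast)
      (rule LIMSEQ_le_const2[OF iter_tendsto_limit[OF s]], use iter_between[OF s] in blast)

lemma limit_neg: "s \<in> {a..b} \<Longrightarrow> limit s < 0"
  using limit_between(2) U_neg by fastforce

lemma weighted_iter_tendsto:
  assumes x: "x \<in> {a..b}"
  shows "weighted limit integrable_on {x..b}"
    and "(\<lambda>k. integral {x..b} (weighted (iter k))) \<longlonglongrightarrow> integral {x..b} (weighted limit)"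
proof -
  define h where "h s = \<bar>weighted L s\<bar> + \<bar>weighted U s\<bar>" for s
  have "continuous_on {a..b} h"
    unfolding h_def using weighted_continuous_on[OF lower_trapped] weighted_continuous_on[OF upper_trapped]
    by (intro continuous_on_add continuous_on_rabs)
  then have h: "h integrable_on {x..b}"
    by (rule integrable_continuous_real[OF continuous_on_subset]) (use x in auto)
  have bound: "norm (weighted (iter k) s) \<le> h s" if s: "s \<in> {x..b}" for k s
  proof -
    have s': "s \<in> {a..b}" using s x by auto
    have "shifted s (U s) \<le> shifted s (iter k s)" "shifted s (iter k s) \<le> shifted s (L s)"
      using iter_between[OF s'] L_le_U[OF s'] by (auto intro: shifted_antimono[OF s'])
    then have "weighted U s \<le> weighted (iter k) s" "weighted (iter k) s \<le> weighted L s"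
      unfolding weighted_def by simp_all
    then show ?thesis
      unfolding h_def real_norm_def by arith
  qed
  have conv: "(\<lambda>k. weighted (iter k) s) \<longlonglongrightarrow> weighted limit s" if s: "s \<in> {x..b}" for s
  proof -
    have s': "s \<in> {a..b}" using s x by auto
    show ?thesis
      unfolding weighted_def shifted_def front_rhs_def
      using iter_tendsto_limit[OF s'] limit_neg[OF s'] by (intro tendsto_intros) auto
  qed
  have "weighted (iter k) integrable_on {x..b}" for k
    using weighted_integrable[OF iter_trapped] x by simp
  from dominated_convergence[OF this h bound conv]
  show "weighted limit integrable_on {x..b}"
    and "(\<lambda>k. integral {x..b} (weighted (iter k))) \<longlonglongrightarrow> integral {x..b} (weighted limit)"
    by auto
qed

lemma step_limit:
  assumes x: "x \<in> {a..b}"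
  shows "step limit x = limit x"
proof (rule LIMSEQ_unique)
  show "(\<lambda>k. step (iter k) x) \<longlonglongrightarrow> step limit x"
    unfolding step_def by (intro tendsto_intros weighted_iter_tendsto(2)[OF x])
  show "(\<lambda>k. step (iter k) x) \<longlonglongrightarrow> limit x"
    using LIMSEQ_Suc[OF iter_tendsto_limit[OF x]] by (simp add: iter_Suc)
qed

lemma limit_trapped: "limit \<in> trapped"
proof -
  have "continuous_on {a..b} (step limit)"
    using weighted_iter_tendsto(1)[of a] a_less_b by (intro step_continuous_on) auto
  then have "continuous_on {a..b} limit"
    by (rule continuous_on_eq) (simp add: step_limit)
  then show ?thesis
    using limit_between unfolding trapped_def by auto
qed

lemma fixed_point_has_derivative:
  assumes w: "w \<in> trapped" and fixed: "\<And>x. x \<in> {a..b} \<Longrightarrow> step w x = w x"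
    and x: "x \<in> {a..b}"
  shows "(w has_real_derivative front_rhs c G x (w x)) (at x within {a..b})"
proof -
  have dI: "((\<lambda>y. integral {y..b} (weighted w)) has_real_derivative - weighted w x)
      (at x within {a..b})"
    by (rule integral_has_real_derivative'[OF _ x])
      (unfold weighted_def, intro continuous_intros shifted_continuous_on w)
  have "exp (M * x) * M * (exp (- M * b) * v - integral {x..b} (weighted w)) = M * step w x"
    unfolding step_def by (simp only: ac_simps)
  then have e1: "exp (M * x) * M * (exp (- M * b) * v - integral {x..b} (weighted w)) = M * w x"
    using fixed[OF x] by simp
  have e2: "exp (M * x) * weighted w x = shifted x (w x)"
    unfolding weighted_def by (simp add: mult.assoc[symmetric] exp_add[symmetric])
  have "(step w has_real_derivative
      exp (M * x) * M * (exp (- M * b) * v - integral {x..b} (weighted w))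
      + exp (M * x) * weighted w x) (at x within {a..b})"
    unfolding step_def[abs_def] by (auto intro!: derivative_eq_intros dI)
  then have "(step w has_real_derivative front_rhs c G x (w x)) (at x within {a..b})"
    unfolding e1 e2 shifted_def by simp
  then show ?thesis
    by (rule has_field_derivative_transform_within[of _ _ _ _ 1]) (use x fixed in auto)
qed

lemma fixed_point_integral_solution:
  assumes w: "w \<in> trapped" and fixed: "\<And>x. x \<in> {a..b} \<Longrightarrow> step w x = w x"
  shows "integral_solution c G a b w"
proof -
  have "((\<lambda>s. front_rhs c G s (w s)) has_integral (w y - w x)) {x..y}"
    if "a \<le> x" "x \<le> y" "y \<le> b" for x y
  proof (rule fundamental_theorem_of_calculus[OF \<open>x \<le> y\<close>])
    fix s assume s: "s \<in> {x..y}"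
    then have "(w has_real_derivative front_rhs c G s (w s)) (at s within {x..y})"
      using that by (intro DERIV_subset[OF fixed_point_has_derivative[OF w fixed]]) auto
    then show "(w has_vector_derivative front_rhs c G s (w s)) (at s within {x..y})"
      by (simp add: has_real_derivative_iff_has_vector_derivative)
  qed
  moreover have "continuous_on {a..b} w"
    using w by (simp add: trapped_def)
  moreover have "\<forall>s\<in>{a..b}. w s < 0"
    using trapped_neg[OF w] by blast
  ultimately show ?thesis
    unfolding integral_solution_def by blast
qed

end

lemma exists_integral_solution_between_barriers:
  assumes "a < b" and "continuous_on {a..b} G" and "\<forall>s\<in>{a..b}. 0 \<le> G s"
    and "lower_barrier c G {a..b} L" and "upper_barrier c G {a..b} U"
    and "\<forall>s\<in>{a..b}. L s \<le> U s \<and> U s < 0" and "L b \<le> v" and "v \<le> U b"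
  obtains w where "integral_solution c G a b w" and "w b = v"
    and "\<forall>s\<in>{a..b}. L s \<le> w s \<and> w s \<le> U s"
proof -
  have "\<forall>s\<in>{a..b}. U s \<noteq> 0" using assms(6) by force
  then obtain M where M: "\<forall>s\<in>{a..b}. G s \<le> M * (U s)^2"
    by (rule exists_bound_by_square[OF assms(2) upper_barrier_continuous_on[OF assms(5)]])
  interpret barrier_iteration c M a b v G L U
    by unfold_locales (use assms M in auto)
  show thesis
  proof (rule that)
    show "integral_solution c G a b limit"
      by (rule fixed_point_integral_solution[OF limit_trapped step_limit])
    show "limit b = v"
      using step_limit[of b] step_at_end a_less_b by auto
    show "\<forall>s\<in>{a..b}. L s \<le> limit s \<and> limit s \<le> U s"
      using limit_between by auto
  qed
qed

section \<open>Solutions on an open interval\<close>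

lemma integral_increments_continuous_on:
  fixes f W :: "real \<Rightarrow> real"
  assumes inc: "\<And>x y. a < x \<Longrightarrow> x \<le> y \<Longrightarrow> y < b \<Longrightarrow> (f has_integral (W y - W x)) {x..y}"
  shows "continuous_on {a<..<b} W"
  unfolding continuous_on_eq_continuous_at[OF open_greaterThanLessThan]
proof
  fix s assume s: "s \<in> {a<..<b}"
  define p where "p = (a + s) / 2"
  define q where "q = (s + b) / 2"
  have pq: "a < p" "p < s" "s < q" "q < b" using s by (auto simp: p_def q_def)
  have W: "W p + integral {p..y} f = W y" if "y \<in> {p..q}" for y
    using integral_unique[OF inc[of p y]] that pq by simp
  have "continuous_on {p..q} (\<lambda>y. W p + integral {p..y} f)"
    using inc[of p q] pq by (intro continuous_intros indefinite_integral_continuous_1) auto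
  then have "continuous_on {p..q} W"
    by (rule continuous_on_eq) (rule W)
  then show "isCont W s"
    by (rule continuous_on_interior) (use pq in auto)
qed

lemma integral_increments_has_derivative:
  fixes f W :: "real \<Rightarrow> real"
  assumes inc: "\<And>x y. a < x \<Longrightarrow> x \<le> y \<Longrightarrow> y < b \<Longrightarrow> (f has_integral (W y - W x)) {x..y}"
    and f: "continuous_on {a<..<b} f" and s: "s \<in> {a<..<b}"
  shows "(W has_real_derivative f s) (at s)"
proof -
  define p where "p = (a + s) / 2"
  define q where "q = (s + b) / 2"
  have pq: "a < p" "p < s" "s < q" "q < b" using s by (auto simp: p_def q_def)
  have W: "W p + integral {p..y} f = W y" if "y \<in> {p..q}" for y
    using integral_unique[OF inc[of p y]] that pq by simp
  have "((\<lambda>y. integral {p..y} f) has_real_derivative f s) (at s within {p..q})"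
    by (rule integral_has_real_derivative[OF continuous_on_subset[OF f]]) (use pq in auto)
  then have "((\<lambda>y. W p + integral {p..y} f) has_real_derivative f s) (at s)"
    using DERIV_add[OF DERIV_const] pq by (fastforce simp: at_within_Icc_at)
  then show ?thesis
    by (rule has_field_derivative_transform_within_open[of _ _ _ "{p<..<q}"])
      (use W pq in auto)
qed

locale barrier_strip =
  fixes c a b :: real and G L U :: "real \<Rightarrow> real"
  assumes a_less_b: "a < b"
    and G_cont: "continuous_on {a<..<b} G"
    and G_nonneg: "\<And>s. s \<in> {a<..<b} \<Longrightarrow> 0 \<le> G s"
    and lower: "lower_barrier c G {a<..<b} L"
    and upper: "upper_barrier c G {a<..<b} U"
    and L_le_U: "\<And>s. s \<in> {a<..<b} \<Longrightarrow> L s \<le> U s"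
    and U_neg: "\<And>s. s \<in> {a<..<b} \<Longrightarrow> U s < 0"
begin

text \<open>Solutions on the exhausting intervals \<open>{lo n..hi n}\<close>, all taking the value of \<open>U\<close> at the
  right end, decrease with \<open>n\<close>; their limit solves the equation on the open interval.\<close>

definition margin :: "nat \<Rightarrow> real" where
  "margin n = (b - a) / (real n + 3)"

definition lo :: "nat \<Rightarrow> real" where
  "lo n = a + margin n"

definition hi :: "nat \<Rightarrow> real" where
  "hi n = b - margin n"

lemma margin_pos: "0 < margin n"
  using a_less_b by (simp add: margin_def)

lemma lo_less_hi: "lo n < hi n"
proof -
  have "2 * (b - a) < (real n + 3) * (b - a)"
    using a_less_b by (intro mult_strict_right_mono) auto
  then have "2 * margin n < b - a"
    by (simp add: margin_def field_simps)
  then show ?thesis by (simp add: lo_def hi_def)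
qed

lemma inner_subset: "{lo n..hi n} \<subseteq> {a<..<b}"
  using margin_pos[of n] by (auto simp: lo_def hi_def)

lemma margin_antimono: "n \<le> m \<Longrightarrow> margin m \<le> margin n"
  using a_less_b unfolding margin_def by (intro divide_left_mono) auto

lemma inner_mono: "n \<le> m \<Longrightarrow> {lo n..hi n} \<subseteq> {lo m..hi m}"
  using margin_antimono[of n m] by (auto simp: lo_def hi_def)

lemma eventually_inner:
  assumes "a < x" and "y < b"
  shows "\<forall>\<^sub>F n in sequentially. {x..y} \<subseteq> {lo n..hi n}"
proof -
  have "(\<lambda>n. (b - a) / real (n + 3)) \<longlonglongrightarrow> 0"
    by (rule LIMSEQ_ignore_initial_segment[OF lim_const_over_n])
  then have "margin \<longlonglongrightarrow> 0"
    by (simp add: margin_def[abs_def] add.commute)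
  then have "\<forall>\<^sub>F n in sequentially. margin n < min (x - a) (b - y)"
    by (rule order_tendstoD(2)) (use assms in simp)
  then show ?thesis
    by eventually_elim (auto simp: lo_def hi_def)
qed

definition approx :: "nat \<Rightarrow> real \<Rightarrow> real" where
  "approx n = (SOME w. integral_solution c G (lo n) (hi n) w \<and> w (hi n) = U (hi n) \<and>
     (\<forall>s\<in>{lo n..hi n}. L s \<le> w s \<and> w s \<le> U s))"

lemma approx:
  "integral_solution c G (lo n) (hi n) (approx n)" "approx n (hi n) = U (hi n)"
  "\<forall>s\<in>{lo n..hi n}. L s \<le> approx n s \<and> approx n s \<le> U s"
proof -
  have sub: "{lo n..hi n} \<subseteq> {a<..<b}" by (rule inner_subset)
  have "hi n \<in> {a<..<b}" using margin_pos[of n] lo_less_hi[of n] by (auto simp: lo_def hi_def)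
  have "\<exists>w. integral_solution c G (lo n) (hi n) w \<and> w (hi n) = U (hi n) \<and>
      (\<forall>s\<in>{lo n..hi n}. L s \<le> w s \<and> w s \<le> U s)"
  proof (rule exists_integral_solution_between_barriers[where v = "U (hi n)", OF lo_less_hi])
    show "continuous_on {lo n..hi n} G" by (rule continuous_on_subset[OF G_cont sub])
    show "lower_barrier c G {lo n..hi n} L" by (rule lower_barrier_subset[OF lower sub])
    show "upper_barrier c G {lo n..hi n} U" by (rule upper_barrier_subset[OF upper sub])
  qed (use sub \<open>hi n \<in> {a<..<b}\<close> G_nonneg L_le_U U_neg lo_less_hi[of n] in auto)
  from someI_ex[OF this]
  show "integral_solution c G (lo n) (hi n) (approx n)" "approx n (hi n) = U (hi n)"
    "\<forall>s\<in>{lo n..hi n}. L s \<le> approx n s \<and> approx n s \<le> U s"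
    unfolding approx_def[symmetric] by blast+
qed

lemma approx_antimono:
  assumes "n \<le> m" and s: "s \<in> {lo n..hi n}"
  shows "approx m s \<le> approx n s"
proof (rule integral_solution_le_if_le_at_end[OF _ approx(1) _ _ s])
  show "integral_solution c G (lo n) (hi n) (approx m)"
    using integral_solution_subinterval[OF approx(1)[of m]] inner_mono[OF assms(1)] lo_less_hi[of n]
    by auto
  show "\<forall>s\<in>{lo n..hi n}. 0 \<le> G s" using G_nonneg inner_subset by blast
  show "approx m (hi n) \<le> approx n (hi n)"
    using approx(2,3)[of m] inner_mono[OF assms(1)] lo_less_hi[of n] by (auto simp: approx(2))
qed

end

context barrier_strip
begin

definition approx_limit :: "real \<Rightarrow> real" where
  "approx_limit s = lim (\<lambda>n. approx n s)"

lemma approx_tendsto: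
  assumes s: "s \<in> {a<..<b}"
  shows "(\<lambda>n. approx n s) \<longlonglongrightarrow> approx_limit s"
proof -
  have "\<forall>\<^sub>F n in sequentially. {s..s} \<subseteq> {lo n..hi n}"
    using s by (intro eventually_inner) auto
  then obtain N where N: "\<And>n. N \<le> n \<Longrightarrow> s \<in> {lo n..hi n}"
    by (auto simp: eventually_sequentially)
  have "(\<lambda>k. approx (k + N) s) \<longlonglongrightarrow> (INF k. approx (k + N) s)"
  proof (rule LIMSEQ_decseq_INF)
    show "bdd_below (range (\<lambda>k. approx (k + N) s))"
      using approx(3) N by (intro bdd_belowI[of _ "L s"]) fastforce
    show "decseq (\<lambda>k. approx (k + N) s)"
      unfolding decseq_def using approx_antimono N by auto
  qed
  then have "convergent (\<lambda>n. approx n s)"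
    unfolding convergent_def by (blast intro: LIMSEQ_offset)
  then show ?thesis
    unfolding approx_limit_def by (simp add: convergent_LIMSEQ_iff)
qed

lemma approx_limit_between:
  assumes s: "s \<in> {a<..<b}"
  shows "L s \<le> approx_limit s" and "approx_limit s \<le> U s"
proof -
  have "\<forall>\<^sub>F n in sequentially. {s..s} \<subseteq> {lo n..hi n}"
    using s by (intro eventually_inner) auto
  then have ev: "\<forall>\<^sub>F n in sequentially. L s \<le> approx n s \<and> approx n s \<le> U s"
    by eventually_elim (use approx(3) in auto)
  show "L s \<le> approx_limit s"
    by (rule tendsto_lowerbound[OF approx_tendsto[OF s]]) (use ev in \<open>auto elim: eventually_mono\<close>)
  show "approx_limit s \<le> U s"
    by (rule tendsto_upperbound[OF approx_tendsto[OF s]]) (use ev in \<open>auto elim: eventually_mono\<close>)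
qed

lemma approx_limit_neg: "s \<in> {a<..<b} \<Longrightarrow> approx_limit s < 0"
  using approx_limit_between(2) U_neg by fastforce

lemma approx_limit_increments:
  assumes xy: "a < x" "x \<le> y" "y < b"
  shows "((\<lambda>s. front_rhs c G s (approx_limit s)) has_integral (approx_limit y - approx_limit x)) {x..y}"
proof -
  obtain N where N: "\<And>n. N \<le> n \<Longrightarrow> {x..y} \<subseteq> {lo n..hi n}"
    using eventually_inner[OF xy(1,3)] by (auto simp: eventually_sequentially)
  have sub: "{x..y} \<subseteq> {a<..<b}" using xy by auto
  define f where "f k s = front_rhs c G s (approx (k + N) s)" for k s
  define h where "h s = \<bar>c\<bar> + G s / (- U s)" for s
  have f: "(f k has_integral (approx (k + N) y - approx (k + N) x)) {x..y}" for k
    using approx(1)[of "k + N"] N[of "k + N"] xy unfolding integral_solution_def f_def by auto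
  have "\<forall>s\<in>{x..y}. - U s \<noteq> 0" using U_neg sub by force
  then have h: "h integrable_on {x..y}"
    unfolding h_def
    using continuous_on_subset[OF G_cont sub] continuous_on_subset[OF upper_barrier_continuous_on[OF upper] sub]
    by (intro integrable_continuous_real continuous_intros)
  have bound: "norm (f k s) \<le> h s" if s: "s \<in> {x..y}" for k s
  proof -
    have "approx (k + N) s \<le> U s" "U s < 0" "0 \<le> G s"
      using approx(3)[of "k + N"] N[of "k + N"] s U_neg G_nonneg sub by auto
    then have "0 \<le> G s / (- approx (k + N) s)" "G s / (- approx (k + N) s) \<le> G s / (- U s)"
      by (simp_all add: divide_left_mono mult_neg_neg divide_nonneg_neg)
    then show ?thesis
      unfolding f_def h_def front_rhs_def by (simp add: minus_divide_right[symmetric])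
  qed
  have conv: "(\<lambda>k. f k s) \<longlonglongrightarrow> front_rhs c G s (approx_limit s)" if s: "s \<in> {x..y}" for s
    unfolding f_def front_rhs_def
    using LIMSEQ_ignore_initial_segment[OF approx_tendsto, of s N] approx_limit_neg[of s] s sub
    by (intro tendsto_intros) auto
  note lim = dominated_convergence[OF has_integral_integrable[OF f] h bound conv]
  have "(\<lambda>k. approx (k + N) y - approx (k + N) x) \<longlonglongrightarrow> approx_limit y - approx_limit x"
    using xy by (intro tendsto_diff LIMSEQ_ignore_initial_segment approx_tendsto) auto
  then have "integral {x..y} (\<lambda>s. front_rhs c G s (approx_limit s)) = approx_limit y - approx_limit x"
    using lim(2) integral_unique[OF f] LIMSEQ_unique by auto
  then show ?thesis
    using lim(1) by (metis has_integral_integral)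
qed

lemma approx_limit_tendsto_zero:
  assumes "\<forall>\<^sub>F s in F. s \<in> {a<..<b}" and "(L \<longlongrightarrow> 0) F"
  shows "(approx_limit \<longlongrightarrow> 0) F"
proof (rule tendsto_sandwich[OF _ _ assms(2) tendsto_const])
  show "\<forall>\<^sub>F s in F. L s \<le> approx_limit s"
    using assms(1) by eventually_elim (rule approx_limit_between)
  show "\<forall>\<^sub>F s in F. approx_limit s \<le> 0"
    using assms(1) by eventually_elim (simp add: approx_limit_neg less_imp_le)
qed

end

lemma exists_solution_between_barriers:
  assumes "a < b" and "continuous_on {a<..<b} G" and "\<forall>s\<in>{a<..<b}. 0 \<le> G s"
    and "lower_barrier c G {a<..<b} L" and "upper_barrier c G {a<..<b} U"
    and "\<forall>s\<in>{a<..<b}. L s \<le> U s \<and> U s < 0"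
    and L_left: "(L \<longlongrightarrow> 0) (at_right a)" and L_right: "(L \<longlongrightarrow> 0) (at_left b)"
  obtains W where "\<forall>s\<in>{a<..<b}. W s < 0 \<and> (W has_real_derivative front_rhs c G s (W s)) (at s)"
    and "(W \<longlongrightarrow> 0) (at_right a)" and "(W \<longlongrightarrow> 0) (at_left b)"
proof -
  interpret barrier_strip c a b G L U
    by unfold_locales (use assms in auto)
  have "continuous_on {a<..<b} approx_limit"
    by (rule integral_increments_continuous_on[OF approx_limit_increments])
  moreover have "\<forall>s\<in>{a<..<b}. approx_limit s \<noteq> 0"
    using approx_limit_neg by force
  ultimately have "continuous_on {a<..<b} (\<lambda>s. front_rhs c G s (approx_limit s))"
    unfolding front_rhs_def using G_cont by (intro continuous_intros) auto
  then have "\<forall>s\<in>{a<..<b}. approx_limit s < 0 \<and>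
      (approx_limit has_real_derivative front_rhs c G s (approx_limit s)) (at s)"
    using approx_limit_neg integral_increments_has_derivative[OF approx_limit_increments] by blast
  moreover have "(approx_limit \<longlongrightarrow> 0) (at_right a)" "(approx_limit \<longlongrightarrow> 0) (at_left b)"
    using approx_limit_tendsto_zero eventually_at_right_real[OF a_less_b]
      eventually_at_left_real[OF a_less_b] L_left L_right by auto
  ultimately show thesis by (rule that)
qed

section \<open>The travelling wave equation\<close>

definition wave_source :: "real \<Rightarrow> real \<Rightarrow> real \<Rightarrow> real" where
  "wave_source n0 chi s = Dtilde n0 s chi * gfun n0 s"

lemma wave_source_eq: "wave_source n0 chi s = n0^2 * (s * (1 - s / n0))^2 * (1 + chi * s)"
  unfolding wave_source_def Dtilde_def gfun_def by (simp add: power2_eq_square algebra_simps)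

lemma wave_source_continuous_on: "n0 \<noteq> 0 \<Longrightarrow> continuous_on S (wave_source n0 chi)"
  unfolding wave_source_def[abs_def] Dtilde_def gfun_def by (intro continuous_intros) auto

lemma wave_source_nonneg:
  assumes "0 \<le> chi" and "0 \<le> s"
  shows "0 \<le> wave_source n0 chi s"
  unfolding wave_source_eq using assms by simp

lemma wave_source_mono:
  assumes "chi' \<le> chi" and "0 \<le> s"
  shows "wave_source n0 chi' s \<le> wave_source n0 chi s"
  unfolding wave_source_eq using assms by (intro mult_left_mono) (auto intro: mult_right_mono)

lemma is_nonpos_solution_iff:
  "is_nonpos_solution n0 chi c z \<longleftrightarrow>
     (\<forall>s\<in>{0<..<n0}. z s < 0 \<and>
        (z has_real_derivative front_rhs c (wave_source n0 chi) s (z s)) (at s)) \<and>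
     (z \<longlongrightarrow> 0) (at_right 0) \<and> (z \<longlongrightarrow> 0) (at_left n0)"
  unfolding is_nonpos_solution_def front_rhs_def wave_source_def by (auto simp: less_le)

lemma logistic_bounds:
  fixes n0 s :: real
  assumes "0 < s" and "s < n0"
  shows "0 < s * (1 - s / n0)" and "s * (1 - s / n0) \<le> n0" and "\<bar>1 - 2 * s / n0\<bar> \<le> 1"
proof -
  have q: "0 < s / n0" "s / n0 < 1" using assms by auto
  show "0 < s * (1 - s / n0)" using q assms by simp
  have "s * (1 - s / n0) \<le> s" using q assms by (simp add: mult_le_cancel_left1)
  then show "s * (1 - s / n0) \<le> n0" using assms by linarith
  show "\<bar>1 - 2 * s / n0\<bar> \<le> 1" using q by (simp add: abs_le_iff)
qed

lemma logistic_has_derivative: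
  "n0 \<noteq> 0 \<Longrightarrow> ((\<lambda>s. s * (1 - s / n0)) has_real_derivative (1 - 2 * s / n0)) (at s)"
  by (auto intro!: derivative_eq_intros simp: field_simps)

lemma logistic_tendsto_zero:
  fixes n0 :: real
  assumes "0 < n0"
  shows "((\<lambda>s. s * (1 - s / n0)) \<longlongrightarrow> 0) (at_right 0)"
    and "((\<lambda>s. s * (1 - s / n0)) \<longlongrightarrow> 0) (at_left n0)"
  using assms by (auto intro!: tendsto_eq_intros)

text \<open>Since the source is \<open>n0\<^sup>2 u\<^sup>2 (1 + chi s)\<close> with \<open>u = s (1 - s / n0)\<close>, the right-hand side
  at \<open>- m u\<^sup>2\<close> is \<open>- c + n0\<^sup>2 (1 + chi s) / m\<close>, large for small \<open>m\<close>, and at \<open>- u\<close> it is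
  \<open>- c + n0\<^sup>2 u (1 + chi s)\<close>, negative for large \<open>c\<close>; both barriers vanish at the ends.\<close>

lemma upper_barrier_wave:
  fixes n0 c chi m :: real
  assumes n0: "0 < n0" and c: "0 < c" and chi: "0 \<le> chi"
    and m: "m = min (1 / n0) (n0^2 / (2 + c))"
  shows "upper_barrier c (wave_source n0 chi) {0<..<n0} (\<lambda>s. - m * (s * (1 - s / n0))^2)"
  unfolding upper_barrier_def
proof
  fix s :: real assume "s \<in> {0<..<n0}"
  then have s: "0 < s" "s < n0" by auto
  define u where "u = s * (1 - s / n0)"
  define u' where "u' = 1 - 2 * s / n0"
  have u: "0 < u" "u \<le> n0" "\<bar>u'\<bar> \<le> 1" using logistic_bounds[OF s] unfolding u_def u'_def by auto
  have mpos: "0 < m" and m1: "m \<le> 1 / n0" and m2: "m \<le> n0^2 / (2 + c)"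
    unfolding m using n0 c by auto
  have "- 2 * m * u * u' \<le> 2 * m * u * \<bar>u'\<bar>"
    using mult_left_mono[of "- u'" "\<bar>u'\<bar>" "2 * m * u"] mpos u by simp
  also have "\<dots> \<le> 2 * m * n0"
    using mult_left_mono[OF mult_mono[of u n0 "\<bar>u'\<bar>" 1], of "2 * m"] mpos u
    by (simp add: mult.assoc)
  also have "\<dots> \<le> 2"
    using m1 n0 by (simp add: field_simps)
  also have "2 \<le> - c + n0^2 / m"
    using m2 mpos c by (simp add: field_simps)
  also have "\<dots> \<le> - c + n0^2 * (1 + chi * s) / m"
    using mpos chi s by (intro add_left_mono divide_right_mono) (auto intro!: mult_left_le)
  also have "\<dots> = front_rhs c (wave_source n0 chi) s (- m * u^2)"
    unfolding front_rhs_def wave_source_eq u_def[symmetric] using u mpos by (simp add: field_simps)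
  finally have "- 2 * m * u * u' \<le> front_rhs c (wave_source n0 chi) s (- m * u^2)" .
  moreover have "((\<lambda>s. - m * (s * (1 - s / n0))^2) has_real_derivative
      - m * (of_nat 2 * (u' * u ^ (2 - Suc 0)))) (at s)"
    unfolding u_def u'_def using n0 by (intro DERIV_cmult DERIV_power logistic_has_derivative) simp
  then have "((\<lambda>s. - m * (s * (1 - s / n0))^2) has_real_derivative - 2 * m * u * u') (at s)"
    by (rule DERIV_cong) simp
  ultimately show "\<exists>D. ((\<lambda>s. - m * (s * (1 - s / n0))^2) has_real_derivative D) (at s) \<and>
      D \<le> front_rhs c (wave_source n0 chi) s (- m * (s * (1 - s / n0))^2)"
    unfolding u_def by blast
qed

lemma lower_barrier_wave:
  fixes n0 c chi :: real
  assumes n0: "0 < n0" and chi: "0 \<le> chi" and c: "1 + n0^3 * (1 + chi * n0) \<le> c"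
  shows "lower_barrier c (wave_source n0 chi) {0<..<n0} (\<lambda>s. - (s * (1 - s / n0)))"
  unfolding lower_barrier_def
proof
  fix s :: real assume "s \<in> {0<..<n0}"
  then have s: "0 < s" "s < n0" by auto
  define u where "u = s * (1 - s / n0)"
  have u: "0 < u" "u \<le> n0" "\<bar>1 - 2 * s / n0\<bar> \<le> 1"
    using logistic_bounds[OF s] unfolding u_def by auto
  have "front_rhs c (wave_source n0 chi) s (- u) = - c + n0^2 * (u * (1 + chi * s))"
    unfolding front_rhs_def wave_source_eq u_def[symmetric] using u by (simp add: field_simps power2_eq_square)
  also have "\<dots> \<le> - c + n0^2 * (n0 * (1 + chi * n0))"
    using u chi s by (intro add_left_mono mult_left_mono mult_mono) auto
  also have "\<dots> \<le> - (1 - 2 * s / n0)"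
    using c u by (simp add: power2_eq_square power3_eq_cube)
  finally have "front_rhs c (wave_source n0 chi) s (- u) \<le> - (1 - 2 * s / n0)" .
  moreover have "((\<lambda>s. - (s * (1 - s / n0))) has_real_derivative - (1 - 2 * s / n0)) (at s)"
    using n0 by (intro derivative_intros logistic_has_derivative) simp
  ultimately show "\<exists>D. ((\<lambda>s. - (s * (1 - s / n0))) has_real_derivative D) (at s) \<and>
      front_rhs c (wave_source n0 chi) s (- (s * (1 - s / n0))) \<le> D"
    unfolding u_def by blast
qed

lemma linear_le_quadratic_barrier:
  fixes n0 m s :: real
  assumes s: "0 < s" "s < n0" and m: "0 < m" "m \<le> 1 / n0"
  shows "- (s * (1 - s / n0)) \<le> - m * (s * (1 - s / n0))^2"
proof -
  define u where "u = s * (1 - s / n0)"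
  have u: "0 < u" "u \<le> n0" using logistic_bounds[OF s] unfolding u_def by auto
  have "m * u \<le> 1 / n0 * n0" using mult_mono[OF m(2) u(2)] m u s by auto
  then have "m * u \<le> 1" using s by simp
  then have "m * u * u \<le> 1 * u" using u by (intro mult_right_mono) auto
  then show ?thesis unfolding u_def[symmetric] by (simp add: power2_eq_square mult.assoc)
qed

lemma in_A_set_if_lower_barrier:
  fixes n0 chi c :: real and L :: "real \<Rightarrow> real"
  assumes n0: "0 < n0" and chi: "0 \<le> chi" and c: "0 < c"
    and L: "lower_barrier c (wave_source n0 chi) {0<..<n0} L"
    and L_le: "\<forall>s\<in>{0<..<n0}. L s \<le> - min (1 / n0) (n0^2 / (2 + c)) * (s * (1 - s / n0))^2"
    and L_left: "(L \<longlongrightarrow> 0) (at_right 0)" and L_right: "(L \<longlongrightarrow> 0) (at_left n0)"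
  shows "c \<in> A_set n0 chi"
proof -
  define m where "m = min (1 / n0) (n0^2 / (2 + c))"
  have "0 < m" using n0 c by (simp add: m_def)
  have bounds: "\<forall>s\<in>{0<..<n0}. L s \<le> - m * (s * (1 - s / n0))^2 \<and> - m * (s * (1 - s / n0))^2 < 0"
  proof
    fix s :: real assume s: "s \<in> {0<..<n0}"
    then have "0 < s * (1 - s / n0)" using logistic_bounds(1) by simp
    then show "L s \<le> - m * (s * (1 - s / n0))^2 \<and> - m * (s * (1 - s / n0))^2 < 0"
      using L_le s \<open>0 < m\<close> unfolding m_def by simp
  qed
  have G: "\<forall>s\<in>{0<..<n0}. 0 \<le> wave_source n0 chi s"
    using wave_source_nonneg[OF chi] by simp
  have "continuous_on {0<..<n0} (wave_source n0 chi)"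
    using n0 by (intro wave_source_continuous_on) simp
  then obtain W where "\<forall>s\<in>{0<..<n0}. W s < 0 \<and>
      (W has_real_derivative front_rhs c (wave_source n0 chi) s (W s)) (at s)"
    and "(W \<longlongrightarrow> 0) (at_right 0)" and "(W \<longlongrightarrow> 0) (at_left n0)"
    by (rule exists_solution_between_barriers[OF n0 _ G L
          upper_barrier_wave[OF n0 c chi m_def] bounds L_left L_right])
  then have "is_nonpos_solution n0 chi c W"
    unfolding is_nonpos_solution_iff by blast
  then show ?thesis
    using c unfolding A_set_def by blast
qed

lemma A_set_nonempty:
  fixes n0 chi :: real
  assumes n0: "0 < n0" and chi: "0 \<le> chi"
  shows "A_set n0 chi \<noteq> {}"
proof -
  define c where "c = 1 + n0^3 * (1 + chi * n0)"
  have c: "0 < c" using n0 chi by (simp add: c_def add_pos_nonneg)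
  have "c \<in> A_set n0 chi"
  proof (rule in_A_set_if_lower_barrier[OF n0 chi c lower_barrier_wave[OF n0 chi]])
    show "1 + n0^3 * (1 + chi * n0) \<le> c" by (simp add: c_def)
    show "\<forall>s\<in>{0<..<n0}. - (s * (1 - s / n0)) \<le> - min (1 / n0) (n0^2 / (2 + c)) * (s * (1 - s / n0))^2"
      using linear_le_quadratic_barrier n0 c by simp
    show "((\<lambda>s. - (s * (1 - s / n0))) \<longlongrightarrow> 0) (at_right 0)"
      "((\<lambda>s. - (s * (1 - s / n0))) \<longlongrightarrow> 0) (at_left n0)"
      using tendsto_minus[OF logistic_tendsto_zero(1)[OF n0]]
        tendsto_minus[OF logistic_tendsto_zero(2)[OF n0]] by simp_all
  qed
  then show ?thesis by blast
qed

lemma A_set_antimono: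
  fixes n0 chi chi' :: real
  assumes n0: "0 < n0" and chi': "0 \<le> chi'" and le: "chi' \<le> chi"
  shows "A_set n0 chi \<subseteq> A_set n0 chi'"
proof
  fix c assume "c \<in> A_set n0 chi"
  then obtain z where c: "0 < c" and "is_nonpos_solution n0 chi c z"
    unfolding A_set_def by blast
  then have z: "\<forall>s\<in>{0<..<n0}. z s < 0 \<and>
        (z has_real_derivative front_rhs c (wave_source n0 chi) s (z s)) (at s)"
    and z_left: "(z \<longlongrightarrow> 0) (at_right 0)" and z_right: "(z \<longlongrightarrow> 0) (at_left n0)"
    unfolding is_nonpos_solution_iff by auto
  have lower: "lower_barrier c (wave_source n0 chi') {0<..<n0} z"
    unfolding lower_barrier_def
  proof
    fix s :: real assume s: "s \<in> {0<..<n0}"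
    have "front_rhs c (wave_source n0 chi') s (z s) \<le> front_rhs c (wave_source n0 chi) s (z s)"
      using z s by (intro front_rhs_mono_source wave_source_mono[OF le]) auto
    then show "\<exists>D. (z has_real_derivative D) (at s) \<and> front_rhs c (wave_source n0 chi') s (z s) \<le> D"
      using z s by blast
  qed
  define m where "m = min (1 / n0) (n0^2 / (2 + c))"
  have "((\<lambda>s. - m * (s * (1 - s / n0))^2) \<longlongrightarrow> 0) (at_left n0)"
    using n0 by (auto intro!: tendsto_eq_intros)
  then have "((\<lambda>s. z s - - m * (s * (1 - s / n0))^2) \<longlongrightarrow> 0) (at_left n0)"
    using tendsto_diff[OF z_right] by fastforce
  then have "\<forall>s\<in>{0<..<n0}. z s \<le> - m * (s * (1 - s / n0))^2"
    using lower_barrier_le_upper_barrier[OF _ lower _ upper_barrier_wave[OF n0 c chi' m_def]]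
      wave_source_nonneg[OF chi'] z by force
  then show "c \<in> A_set n0 chi'"
    using in_A_set_if_lower_barrier[OF n0 chi' c lower _ z_left z_right] unfolding m_def by blast
qed

lemma c_star_mono:
  fixes n0 chi chi' :: real
  assumes "0 < n0" and "0 \<le> chi'" and "chi' \<le> chi"
  shows "c_star n0 chi' \<le> c_star n0 chi"
  unfolding c_star_def
proof (rule cInf_superset_mono)
  show "A_set n0 chi \<noteq> {}" using assms by (intro A_set_nonempty) auto
  show "bdd_below (A_set n0 chi')" unfolding A_set_def by (auto intro: bdd_belowI[of _ 0])
  show "A_set n0 chi \<subseteq> A_set n0 chi'" using assms by (rule A_set_antimono)
qed

lemma cbar_mono:
  fixes n0 sigma0 chi chi' :: real
  assumes n0: "0 < n0" and sigma0: "0 \<le> sigma0" and le: "chi' \<le> chi"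
  shows "cbar n0 sigma0 chi' \<le> cbar n0 sigma0 chi"
proof -
  let ?f = "\<lambda>chi b. b * (1 - b / n0)^2 * (1 + chi * b)"
  have "bdd_above (?f chi ` {0..n0})"
    using n0 by (intro bounded_imp_bdd_above compact_imp_bounded compact_continuous_image
        continuous_intros) auto
  moreover have "\<exists>b'\<in>{0..n0}. ?f chi' b \<le> ?f chi b'" if b: "b \<in> {0..n0}" for b
  proof
    show "?f chi' b \<le> ?f chi b"
      using b le by (intro mult_left_mono) (auto intro: mult_right_mono)
  qed (rule b)
  ultimately have "Sup (?f chi' ` {0..n0}) \<le> Sup (?f chi ` {0..n0})"
    using n0 by (intro cSUP_mono) auto
  then show ?thesis
    unfolding cbar_def using n0 sigma0 by (intro mult_left_mono real_sqrt_le_mono) auto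
qed

theorem propositionA1:
  fixes n0 sigma0 chi0 :: real
  assumes "n0 > 0" and "sigma0 > 0" and "chi0 \<ge> 0"
  shows "cbar n0 sigma0 chi0 \<ge> cbar n0 sigma0 0 \<and> c_star n0 chi0 \<ge> c_star n0 0"
  using assms cbar_mono[of n0 sigma0 0 chi0] c_star_mono[of n0 0 chi0] by simp

end
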